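(* Consider the ARLOD model on a finite connected graph $G$ with $N\ge 2$ agents, learning rate $\alpha\in(0,1)$, exploration rate $\epsilon\in(0,1)$, and any initial Q-values in $[-1,1]$. Then $$\mathbb{P}\big(\exists\, t_0<\infty,\ \exists\, o\in\{-1,1\}: Q^i_o(t)>Q^i_{-o}(t)\ \ \forall i\in\{1,\dots,N\},\ \forall t\ge t_0\big)=1,$$ i.e. almost surely the system eventually reaches consensus and remains in it forever.
   Context: The ARLOD (asymmetric reinforcement learning for opinion dynamics) model: $G=(V,E)$ is a finite simple undirected graph on vertex set $V=\{1,\dots,N\}$ (agents); $N(i)=\{u:(u,i)\in E\}$ is the neighbourhood of $i$. Each agent $i$ holds two Q-values $Q^i_{1}(t),Q^i_{-1}(t)\in\mathbb{R}$, initialized in $[-1,1]$. The favoured opinion of agent $i$ at time $t$ is $1$ if $Q^i_1(t)\ge Q^i_{-1}(t)$ and $-1$ otherwise. In each discrete round $t$: an agent $i$ is chosen uniformly at random from $V$; $i$ chooses a neighbour $j\in N(i)$ uniformly at random; $i$ expresses an opinion $o_i(t)$, equal to its favoured opinion with probability $1-\epsilon$ and to the other opinion with probability $\epsilon$; $j$ responds with $R_j=1$ if $o_i(t)$ equals $j$'s favoured opinion and $R_j=-1$ otherwise; then only agent $i$ updates, via $Q^i_{o_i(t)}(t+1)=(1-\alpha)Q^i_{o_i(t)}(t)+\alpha R_j$ and $Q^i_{-o_i(t)}(t+1)=Q^i_{-o_i(t)}(t)$. All other agents' Q-values are unchanged in that round. *)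

theory Defs
  imports "HOL-Probability.Probability"
begin

text \<open>Opinions are the integers 1 and -1.
  A state assigns to each agent i and opinion o the Q-value Q i o.\<close>

type_synonym qstate = "nat \<Rightarrow> int \<Rightarrow> real"

definition agents :: "nat \<Rightarrow> nat set" where
  "agents N = {1..N}"

definition simple_graph :: "nat \<Rightarrow> (nat \<Rightarrow> nat \<Rightarrow> bool) \<Rightarrow> bool" where
  "simple_graph N E \<longleftrightarrow>
     (\<forall>u v. E u v \<longrightarrow> u \<in> agents N \<and> v \<in> agents N) \<and>
     (\<forall>u v. E u v \<longrightarrow> E v u) \<and> (\<forall>u. \<not> E u u)"

definition connected_graph :: "nat \<Rightarrow> (nat \<Rightarrow> nat \<Rightarrow> bool) \<Rightarrow> bool" where
  "connected_graph N E \<longleftrightarrow> (\<forall>u\<in>agents N. \<forall>v\<in>agents N. E\<^sup>*\<^sup>* u v)"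

definition nbrs :: "(nat \<Rightarrow> nat \<Rightarrow> bool) \<Rightarrow> nat \<Rightarrow> nat set" where
  "nbrs E i = {u. E u i}"

definition favoured :: "qstate \<Rightarrow> nat \<Rightarrow> int" where
  "favoured Q i = (if Q i 1 \<ge> Q i (-1) then 1 else -1)"

text \<open>None of these distributions depends on the current Q-values, so the process is
  driven by an i.i.d. sequence of such draws.\<close>
definition round_noise :: "nat \<Rightarrow> (nat \<Rightarrow> nat \<Rightarrow> bool) \<Rightarrow> real \<Rightarrow> (nat \<times> nat \<times> bool) pmf" where
  "round_noise N E eps =
     do { i \<leftarrow> pmf_of_set (agents N);
          j \<leftarrow> pmf_of_set (nbrs E i);
          b \<leftarrow> bernoulli_pmf eps;
          return_pmf (i, j, b) }"

definition arlod_step :: "real \<Rightarrow> qstate \<Rightarrow> nat \<times> nat \<times> bool \<Rightarrow> qstate" where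
  "arlod_step \<alpha> Q c =
     (case c of (i, j, explore) \<Rightarrow>
        let ex = (if explore then - favoured Q i else favoured Q i);
            R = (if ex = favoured Q j then 1 else -1 :: real)
        in Q(i := (Q i)(ex := (1 - \<alpha>) * Q i ex + \<alpha> * R)))"

fun arlod_traj :: "real \<Rightarrow> qstate \<Rightarrow> (nat \<times> nat \<times> bool) stream \<Rightarrow> nat \<Rightarrow> qstate" where
  "arlod_traj \<alpha> Q0 \<omega> 0 = Q0"
| "arlod_traj \<alpha> Q0 \<omega> (Suc t) = arlod_step \<alpha> (arlod_traj \<alpha> Q0 \<omega> t) (\<omega> !! t)"

end

theory Submission
  imports Defs
begin

text \<open>The Q-values stay in [-1, 1], and a state in which every agent strictly prefers the same
  opinion x is absorbing: every listener then favours x, so a speaker's Q-value of x can only rise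
  and that of -x only fall. Conversely, with (1 - \<alpha>)^n < 1/2, from every state some sequence of
  at most 2nN rounds, each of probability at least p = min \<epsilon> (1 - \<epsilon>) / N^2, leads to
  consensus: an agent that keeps addressing one neighbour j, first with j's favoured opinion g and
  then with -g (exploration makes either utterance possible), ends up preferring g, and copying
  opinions along the edges of the connected graph spreads one opinion to all agents. Hence the
  supremum M over states of the probability of never reaching consensus satisfies
  M \<le> (1 - p^(2nN)) M, so M = 0.\<close>

section \<open>Reaching a target set under i.i.d. driving noise\<close>

lemma pmf_bind_ge_mult: "pmf M y * pmf (f y) x \<le> pmf (bind_pmf M f) x"
proof -
  have "ennreal (pmf M y * pmf (f y) x) = (\<integral>\<^sup>+z. ennreal (pmf (f y) x) * indicator {y} z \<partial>M)"
    by (simp add: nn_integral_cmult_indicator emeasure_pmf_single ennreal_mult mult.commute)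
  also have "\<dots> \<le> (\<integral>\<^sup>+z. pmf (f z) x \<partial>M)"
    by (intro nn_integral_mono) (auto split: split_indicator)
  also have "\<dots> = ennreal (pmf (bind_pmf M f) x)"
    by (simp add: ennreal_pmf_bind)
  finally show ?thesis by simp
qed

lemma measurable_foldl_stake[measurable]:
  fixes D :: "'a::countable pmf"
  shows "Measurable.pred (stream_space (measure_pmf D)) (\<lambda>\<omega>. P (foldl f s (stake t \<omega>)))"
  by measurable

context
  fixes D :: "'a::countable pmf" and f :: "'s \<Rightarrow> 'a \<Rightarrow> 's" and C :: "'s \<Rightarrow> bool"
begin

definition avoid_prob :: "'s \<Rightarrow> real" where
  "avoid_prob s = \<P>(\<omega> in stream_space (measure_pmf D). \<forall>t. \<not> C (foldl f s (stake t \<omega>)))"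

lemma avoid_prob_nonneg: "0 \<le> avoid_prob s"
  by (simp add: avoid_prob_def)

lemma avoid_prob_le_1: "avoid_prob s \<le> 1"
  unfolding avoid_prob_def
  by (rule prob_space.prob_le_1[OF prob_space.prob_space_stream_space[OF prob_space_measure_pmf]])

lemma avoid_prob_eq_0:
  assumes "C s"
  shows "avoid_prob s = 0"
proof -
  have "{\<omega> \<in> space (stream_space (measure_pmf D)). \<forall>t. \<not> C (foldl f s (stake t \<omega>))} = {}"
    using assms by (auto intro!: exI[of _ 0])
  then show ?thesis unfolding avoid_prob_def by (simp only: measure_empty)
qed

lemma avoid_prob_recurrence:
  assumes "finite (set_pmf D)" "\<not> C s"
  shows "avoid_prob s = (\<Sum>c\<in>set_pmf D. avoid_prob (f s c) * pmf D c)"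
proof -
  have shift: "(\<forall>t. \<not> C (foldl f s (stake t (c ## \<omega>)))) \<longleftrightarrow> (\<forall>t. \<not> C (foldl f (f s c) (stake t \<omega>)))"
    for c \<omega> using assms(2) by (metis foldl_Cons foldl_Nil stake.simps not0_implies_Suc stream.sel)
  have "ennreal (avoid_prob s)
      = (\<integral>\<^sup>+c. ennreal (avoid_prob (f s c)) \<partial>measure_pmf D)"
    unfolding avoid_prob_def shift[symmetric]
    by (rule prob_space.prob_stream_space[OF prob_space_measure_pmf]) measurable
  also have "\<dots> = (\<Sum>c\<in>set_pmf D. ennreal (avoid_prob (f s c)) * pmf D c)"
    by (rule nn_integral_measure_pmf_finite[OF assms(1)]) simp
  also have "\<dots> = ennreal (\<Sum>c\<in>set_pmf D. avoid_prob (f s c) * pmf D c)"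
    by (subst sum_ennreal[symmetric]) (auto simp: avoid_prob_nonneg ennreal_mult)
  finally show ?thesis
    by (subst (asm) ennreal_inj) (auto intro!: sum_nonneg simp: avoid_prob_nonneg)
qed

context
  fixes I :: "'s \<Rightarrow> bool" and p :: real
  assumes finite_D: "finite (set_pmf D)"
    and invariant: "\<And>s c. I s \<Longrightarrow> c \<in> set_pmf D \<Longrightarrow> I (f s c)"
    and p_pos: "0 < p"
begin

lemma avoid_prob_le_along_path:
  assumes "\<And>s. I s \<Longrightarrow> avoid_prob s \<le> M" "0 \<le> M"
  shows "I s \<Longrightarrow> \<forall>c\<in>set ws. p \<le> pmf D c \<Longrightarrow> C (foldl f s ws) \<Longrightarrow>
    avoid_prob s \<le> M - p ^ length ws * M"
proof (induction ws arbitrary: s)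
  case Nil
  then show ?case by (simp add: avoid_prob_eq_0)
next
  case (Cons c ws)
  have p_le: "p \<le> pmf D c" using Cons.prems(2) by simp
  then have cD: "c \<in> set_pmf D" using p_pos by (simp add: set_pmf_eq')
  have pw: "0 \<le> p ^ length ws" "p ^ length ws \<le> 1"
    using p_pos p_le pmf_le_1[of D c] by (auto intro: power_le_one)
  show ?case
  proof (cases "C s")
    case True
    have "p ^ length (c # ws) * M \<le> 1 * M"
      using pw p_le pmf_le_1[of D c] p_pos assms(2) by (intro mult_right_mono) (auto intro: mult_le_one)
    then show ?thesis using avoid_prob_eq_0[OF True] by simp
  next
    case False
    have IH: "avoid_prob (f s c) \<le> M - p ^ length ws * M"
      using Cons.IH[of "f s c"] Cons.prems invariant[OF _ cD] by simp
    have rest: "(\<Sum>c'\<in>set_pmf D - {c}. avoid_prob (f s c') * pmf D c') \<le> M * (1 - pmf D c)"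
    proof -
      have "(\<Sum>c'\<in>set_pmf D - {c}. avoid_prob (f s c') * pmf D c') \<le> (\<Sum>c'\<in>set_pmf D - {c}. M * pmf D c')"
        by (intro sum_mono mult_right_mono assms(1) invariant[OF Cons.prems(1)]) auto
      also have "\<dots> = M * (1 - pmf D c)"
        using sum_pmf_eq_1[OF finite_D order.refl] finite_D cD
        by (simp add: sum_distrib_left[symmetric] sum_diff1)
      finally show ?thesis .
    qed
    have "avoid_prob s = avoid_prob (f s c) * pmf D c + (\<Sum>c'\<in>set_pmf D - {c}. avoid_prob (f s c') * pmf D c')"
      using avoid_prob_recurrence[OF finite_D False] finite_D cD by (simp add: sum.remove)
    also have "\<dots> \<le> (M - p ^ length ws * M) * pmf D c + M * (1 - pmf D c)"
      using IH rest by (intro add_mono mult_right_mono) auto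
    also have "\<dots> = M - (p ^ length ws * M) * pmf D c" by (simp add: algebra_simps)
    also have "\<dots> \<le> M - (p ^ length ws * M) * p"
      using p_le pw assms(2) by (intro diff_left_mono mult_left_mono) auto
    also have "\<dots> = M - p ^ length (c # ws) * M" by (simp add: algebra_simps)
    finally show ?thesis .
  qed
qed

lemma avoid_prob_vanishes:
  assumes reach: "\<And>s. I s \<Longrightarrow> \<exists>ws. length ws \<le> K \<and> (\<forall>c\<in>set ws. p \<le> pmf D c) \<and> C (foldl f s ws)"
    and "p \<le> 1" and "I s0"
  shows "avoid_prob s0 = 0"
proof -
  define M where "M = Sup (avoid_prob ` {s. I s})"
  have bdd: "bdd_above (avoid_prob ` {s. I s})"
    using avoid_prob_le_1 by (intro bdd_aboveI[of _ 1]) auto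
  have le_M: "avoid_prob s \<le> M" if "I s" for s
    unfolding M_def using bdd that by (intro cSup_upper) auto
  have M_nonneg: "0 \<le> M"
    using le_M[OF \<open>I s0\<close>] avoid_prob_nonneg[of s0] by linarith
  have "avoid_prob s \<le> M - p ^ K * M" if s: "I s" for s
  proof -
    obtain ws where ws: "length ws \<le> K" "\<forall>c\<in>set ws. p \<le> pmf D c" "C (foldl f s ws)"
      using reach[OF s] by blast
    have "p ^ K * M \<le> p ^ length ws * M"
      using ws(1) p_pos \<open>p \<le> 1\<close> M_nonneg by (intro mult_right_mono power_decreasing) auto
    then show ?thesis
      using avoid_prob_le_along_path[OF le_M M_nonneg s ws(2,3)] by linarith
  qed
  then have "M \<le> M - p ^ K * M"
    unfolding M_def using \<open>I s0\<close> by (intro cSup_least) auto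
  then have "M = 0"
    using M_nonneg zero_less_power[OF p_pos, of K] by (simp add: mult_le_0_iff)
  then show ?thesis using le_M[OF \<open>I s0\<close>] avoid_prob_nonneg[of s0] by linarith
qed

lemma AE_eventually_reaches:
  assumes reach: "\<And>s. I s \<Longrightarrow> \<exists>ws. length ws \<le> K \<and> (\<forall>c\<in>set ws. p \<le> pmf D c) \<and> C (foldl f s ws)"
    and "p \<le> 1" and "I s0"
  shows "AE \<omega> in stream_space (measure_pmf D). \<exists>t. C (foldl f s0 (stake t \<omega>))"
proof -
  have "avoid_prob s0 = 0"
    using reach \<open>p \<le> 1\<close> \<open>I s0\<close> by (rule avoid_prob_vanishes)
  then show ?thesis unfolding avoid_prob_def
    by (subst (asm) prob_space.prob_Collect_eq_0[OF prob_space.prob_space_stream_space[OF prob_space_measure_pmf]])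
       simp_all
qed

end

end

section \<open>The ARLOD model\<close>

lemma rtranclp_crosses_boundary:
  "r\<^sup>*\<^sup>* u v \<Longrightarrow> u \<in> A \<Longrightarrow> v \<notin> A \<Longrightarrow> \<exists>a b. a \<in> A \<and> b \<notin> A \<and> r a b"
  by (induction rule: rtranclp_induct) auto

lemma arlod_traj_eq_foldl: "arlod_traj \<alpha> Q \<omega> t = foldl (arlod_step \<alpha>) Q (stake t \<omega>)"
  by (induction t) (auto simp: stake_Suc simp del: stake.simps(2))

lemma measurable_arlod_traj[measurable]:
  fixes D :: "(nat \<times> nat \<times> bool) pmf"
  shows "Measurable.pred (stream_space (measure_pmf D)) (\<lambda>\<omega>. P (arlod_traj \<alpha> Q \<omega> t))"
  unfolding arlod_traj_eq_foldl by measurable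

lemma finite_agents: "finite (agents N)"
  by (simp add: agents_def)

lemma favoured_cases: "favoured Q i = 1 \<or> favoured Q i = -1"
  by (simp add: favoured_def)

lemma favoured_eq_if_prefers: "x \<in> {-1, 1::int} \<Longrightarrow> Q j (-x) < Q j x \<Longrightarrow> favoured Q j = x"
  by (auto simp: favoured_def)

definition q_bounded :: "nat \<Rightarrow> qstate \<Rightarrow> bool" where
  "q_bounded N Q \<longleftrightarrow> (\<forall>i\<in>agents N. \<forall>x\<in>{-1, 1::int}. Q i x \<in> {-1..1})"

definition consensus_on :: "nat \<Rightarrow> int \<Rightarrow> qstate \<Rightarrow> bool" where
  "consensus_on N x Q \<longleftrightarrow> (\<forall>i\<in>agents N. Q i (-x) < Q i x)"

definition consensus :: "nat \<Rightarrow> qstate \<Rightarrow> bool" where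
  "consensus N Q \<longleftrightarrow> (\<exists>x\<in>{-1, 1::int}. consensus_on N x Q)"

definition supporters :: "nat \<Rightarrow> int \<Rightarrow> qstate \<Rightarrow> nat set" where
  "supporters N x Q = {i \<in> agents N. Q i (-x) < Q i x}"

lemma consensus_on_iff_supporters: "consensus_on N x Q \<longleftrightarrow> agents N - supporters N x Q = {}"
  by (auto simp: consensus_on_def supporters_def)

locale arlod =
  fixes N :: nat and E :: "nat \<Rightarrow> nat \<Rightarrow> bool" and \<alpha> \<epsilon> :: real
  assumes N_ge_2: "N \<ge> 2"
    and simple: "simple_graph N E"
    and connected: "connected_graph N E"
    and \<alpha>_pos: "0 < \<alpha>" and \<alpha>_lt_1: "\<alpha> < 1"
    and \<epsilon>_pos: "0 < \<epsilon>" and \<epsilon>_lt_1: "\<epsilon> < 1"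
begin

abbreviation "D \<equiv> round_noise N E \<epsilon>"
abbreviation "step \<equiv> arlod_step \<alpha>"

fun admissible :: "nat \<times> nat \<times> bool \<Rightarrow> bool" where
  "admissible (i, j, b) \<longleftrightarrow> i \<in> agents N \<and> E j i"

lemma edge_in_agents: "E u v \<Longrightarrow> u \<in> agents N \<and> v \<in> agents N"
  using simple by (auto simp: simple_graph_def)

lemma edge_neq: "E u v \<Longrightarrow> u \<noteq> v"
  using simple by (auto simp: simple_graph_def)

lemma ex_neighbour:
  assumes "i \<in> agents N"
  shows "\<exists>j. E j i"
proof -
  define k where "k = (if i = 1 then 2 else (1::nat))"
  have k: "k \<in> agents N" "k \<noteq> i" using N_ge_2 assms by (auto simp: k_def agents_def)
  then have "E\<^sup>*\<^sup>* k i" using connected assms by (auto simp: connected_graph_def)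
  then show ?thesis using k(2) by (cases rule: rtranclp.cases) auto
qed

lemma nbrs_subset_agents: "nbrs E i \<subseteq> agents N"
  using edge_in_agents by (auto simp: nbrs_def)

lemma finite_nbrs: "finite (nbrs E i)"
  using nbrs_subset_agents finite_agents by (rule finite_subset)

lemma nbrs_nonempty: "i \<in> agents N \<Longrightarrow> nbrs E i \<noteq> {}"
  using ex_neighbour by (auto simp: nbrs_def)

lemma agents_nonempty: "agents N \<noteq> {}"
  using N_ge_2 by (auto simp: agents_def)

lemma set_round_noise: "c \<in> set_pmf D \<Longrightarrow> admissible c"
  using finite_agents agents_nonempty finite_nbrs nbrs_nonempty
  by (auto simp: round_noise_def nbrs_def)

lemma finite_set_round_noise: "finite (set_pmf D)"
proof (rule finite_subset)
  show "set_pmf D \<subseteq> agents N \<times> agents N \<times> UNIV"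
    using set_round_noise edge_in_agents by fastforce
qed (use finite_agents in simp)

lemma pmf_round_noise_ge:
  assumes "admissible c"
  shows "min \<epsilon> (1 - \<epsilon>) / real N ^ 2 \<le> pmf D c"
proof -
  obtain i j b where c: "c = (i, j, b)" by (cases c)
  have i: "i \<in> agents N" and j: "j \<in> nbrs E i" using assms by (auto simp: c nbrs_def)
  define B where "B = (\<lambda>j::nat. bernoulli_pmf \<epsilon> \<bind> (\<lambda>b. return_pmf (i, j, b)))"
  have pmf_i: "pmf (pmf_of_set (agents N)) i = 1 / real N"
    using i finite_agents agents_nonempty by (simp add: agents_def)
  have "card (nbrs E i) \<le> N"
    using card_mono[OF finite_agents nbrs_subset_agents] by (simp add: agents_def)
  then have pmf_j: "1 / real N \<le> pmf (pmf_of_set (nbrs E i)) j"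
    using j finite_nbrs nbrs_nonempty[OF i] by (simp add: frac_le card_gt_0_iff)
  have pmf_b: "min \<epsilon> (1 - \<epsilon>) \<le> pmf (B j) c"
    using pmf_bind_ge_mult[of "bernoulli_pmf \<epsilon>" b "\<lambda>b. return_pmf (i, j, b)" c] \<epsilon>_pos \<epsilon>_lt_1
    by (cases b) (auto simp: B_def c)
  have "min \<epsilon> (1 - \<epsilon>) / real N ^ 2 = 1 / real N * (1 / real N * min \<epsilon> (1 - \<epsilon>))"
    by (simp add: power2_eq_square)
  also have "\<dots> \<le> pmf (pmf_of_set (agents N)) i * (pmf (pmf_of_set (nbrs E i)) j * pmf (B j) c)"
    unfolding pmf_i using pmf_j pmf_b \<epsilon>_pos \<epsilon>_lt_1
    by (intro mult_left_mono mult_mono) auto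
  also have "\<dots> \<le> pmf (pmf_of_set (agents N)) i * pmf (pmf_of_set (nbrs E i) \<bind> B) c"
    by (intro mult_left_mono pmf_bind_ge_mult) simp
  also have "\<dots> \<le> pmf D c"
    unfolding round_noise_def B_def by (rule pmf_bind_ge_mult)
  finally show ?thesis .
qed

lemma q_bounded_step:
  assumes bounded: "q_bounded N Q"
  shows "q_bounded N (step Q c)"
proof -
  obtain i j b where c: "c = (i, j, b)" by (cases c)
  define ex where "ex = (if b then - favoured Q i else favoured Q i)"
  define R :: real where "R = (if ex = favoured Q j then 1 else -1)"
  have step: "step Q c = Q(i := (Q i)(ex := (1 - \<alpha>) * Q i ex + \<alpha> * R))"
    by (simp add: arlod_step_def c ex_def R_def Let_def)
  have "(1 - \<alpha>) * Q i ex + \<alpha> * R \<in> {-1..1}" if "i \<in> agents N" "ex \<in> {-1, 1}"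
  proof -
    have "Q i ex \<in> {-1..1}" "R \<in> {-1..1}" using bounded that by (auto simp: q_bounded_def R_def)
    then show ?thesis
      using convex_bound_le[of "Q i ex" 1 R "1 - \<alpha>" \<alpha>] convex_bound_le[of "- Q i ex" 1 "- R" "1 - \<alpha>" \<alpha>]
        \<alpha>_pos \<alpha>_lt_1
      by auto
  qed
  then show ?thesis using bounded by (auto simp: q_bounded_def step)
qed

lemma q_bounded_foldl: "q_bounded N Q \<Longrightarrow> q_bounded N (foldl step Q ws)"
  by (induction ws arbitrary: Q) (auto intro: q_bounded_step)

lemma q_bounded_traj: "q_bounded N Q \<Longrightarrow> q_bounded N (arlod_traj \<alpha> Q \<omega> t)"
  by (induction t) (auto intro: q_bounded_step)

text \<open>The listener j of an admissible draw favours x, so the speaker's Q-value of x can only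
  move towards 1 and that of -x only towards -1.\<close>
lemma consensus_on_step:
  assumes bounded: "q_bounded N Q" and x: "x \<in> {-1, 1::int}" and cons: "consensus_on N x Q"
    and adm: "admissible c"
  shows "consensus_on N x (step Q c)"
proof -
  obtain i j b where c: "c = (i, j, b)" by (cases c)
  have i: "i \<in> agents N" and ji: "E j i" using adm by (auto simp: c)
  have fav_j: "favoured Q j = x"
    using cons edge_in_agents[OF ji] x by (intro favoured_eq_if_prefers) (auto simp: consensus_on_def)
  define ex where "ex = (if b then - favoured Q i else favoured Q i)"
  have ex: "ex = x \<or> ex = -x" using favoured_cases[of Q i] x by (auto simp: ex_def)
  have step: "step Q c = Q(i := (Q i)(ex := (1 - \<alpha>) * Q i ex + \<alpha> * (if ex = x then 1 else -1)))"
    by (simp add: arlod_step_def c ex_def fav_j Let_def)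
  have "\<alpha> * Q i x \<le> \<alpha> * 1" "\<alpha> * (-1) \<le> \<alpha> * Q i (-x)"
    using bounded i x \<alpha>_pos by (intro mult_left_mono; force simp: q_bounded_def)+
  then have "Q i x \<le> (1 - \<alpha>) * Q i x + \<alpha>" "(1 - \<alpha>) * Q i (-x) - \<alpha> \<le> Q i (-x)"
    by (simp_all add: algebra_simps)
  then show ?thesis
    using cons ex x by (auto simp: consensus_on_def step)
qed

lemma consensus_on_traj_persists:
  assumes adm: "\<forall>t. admissible (\<omega> !! t)" and bounded: "q_bounded N Q" and x: "x \<in> {-1, 1::int}"
    and cons: "consensus_on N x (arlod_traj \<alpha> Q \<omega> t0)" and "t0 \<le> t"
  shows "consensus_on N x (arlod_traj \<alpha> Q \<omega> t)"
  using \<open>t0 \<le> t\<close>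
proof (induction t rule: dec_induct)
  case (step t)
  then show ?case using consensus_on_step[OF q_bounded_traj[OF bounded] x _ adm[rule_format]] by simp
qed (rule cons)

text \<open>Speaking y to the same neighbour j again and again, which the exploration flag allows
  whatever agent i favours, drives Q i y geometrically towards j's verdict on y.\<close>
lemma repeated_address:
  fixes Q :: qstate and n :: nat
  assumes i: "i \<in> agents N" and ji: "E j i" and y: "y \<in> {-1, 1::int}"
  defines "R \<equiv> if y = favoured Q j then 1 else -1"
  shows "\<exists>ws. length ws = n \<and> (\<forall>c\<in>set ws. admissible c) \<and>
    foldl step Q ws = Q(i := (Q i)(y := R + (1 - \<alpha>) ^ n * (Q i y - R)))"
proof (induction n)
  case 0
  show ?case by (intro exI[of _ "[]"]) simp
next
  case (Suc n)
  then obtain ws where ws: "length ws = n" "\<forall>c\<in>set ws. admissible c"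
    and Qn: "foldl step Q ws = Q(i := (Q i)(y := R + (1 - \<alpha>) ^ n * (Q i y - R)))"
    by blast
  define c where "c = (i, j, favoured (foldl step Q ws) i \<noteq> y)"
  have fav_j: "favoured (foldl step Q ws) j = favoured Q j"
    using edge_neq[OF ji] by (simp add: Qn favoured_def)
  have said: "(if favoured Q' i \<noteq> y then - favoured Q' i else favoured Q' i) = y" for Q'
    using favoured_cases[of Q' i] y by auto
  have "foldl step Q (ws @ [c]) = step (foldl step Q ws) c" by simp
  also have "\<dots> = (foldl step Q ws)(i := (foldl step Q ws i)(y :=
      (1 - \<alpha>) * foldl step Q ws i y + \<alpha> * R))"
    by (simp add: c_def arlod_step_def Let_def said fav_j R_def)
  also have "\<dots> = Q(i := (Q i)(y := R + (1 - \<alpha>) ^ Suc n * (Q i y - R)))"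
    by (simp add: Qn algebra_simps)
  finally have extended: "foldl step Q (ws @ [c]) = Q(i := (Q i)(y := R + (1 - \<alpha>) ^ Suc n * (Q i y - R)))" .
  show ?case
  proof (intro exI[of _ "ws @ [c]"] conjI)
    show "length (ws @ [c]) = Suc n" using ws by simp
    show "\<forall>c\<in>set (ws @ [c]). admissible c" using ws i ji by (auto simp: c_def)
  qed (rule extended)
qed

text \<open>Agent i first pushes its Q-value of j's favoured opinion g towards 1 and then that of
  -g towards -1; once both are within (1 - \<alpha>)^n < 1/2 of their targets, i prefers g.\<close>
lemma copy_neighbour:
  assumes n: "(1 - \<alpha>) ^ n < 1 / 2" and i: "i \<in> agents N" and ji: "E j i"
    and bounded: "q_bounded N Q"
  shows "\<exists>ws. length ws = 2 * n \<and> (\<forall>c\<in>set ws. admissible c) \<and>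
     (\<forall>k. k \<noteq> i \<longrightarrow> foldl step Q ws k = Q k) \<and>
     foldl step Q ws i (- favoured Q j) < foldl step Q ws i (favoured Q j)"
proof -
  define g where "g = favoured Q j"
  define \<beta> where "\<beta> = (1 - \<alpha>) ^ n"
  have g: "g \<in> {-1, 1}" "-g \<in> {-1, 1}" "-g \<noteq> g" using favoured_cases[of Q j] by (auto simp: g_def)
  obtain ws1 where ws1: "length ws1 = n" "\<forall>c\<in>set ws1. admissible c"
    and Q1: "foldl step Q ws1 = Q(i := (Q i)(g := 1 + \<beta> * (Q i g - 1)))"
    using repeated_address[OF i ji g(1), where Q = Q and n = n] by (auto simp: g_def \<beta>_def)
  define Q1 where "Q1 = foldl step Q ws1"
  have "favoured Q1 j = g" using edge_neq[OF ji] by (simp add: Q1_def Q1 favoured_def g_def)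
  then obtain ws2 where ws2: "length ws2 = n" "\<forall>c\<in>set ws2. admissible c"
    and Q2: "foldl step Q1 ws2 = Q1(i := (Q1 i)(-g := -1 + \<beta> * (Q1 i (-g) + 1)))"
    using repeated_address[OF i ji g(2), where Q = Q1 and n = n] g(3) by (auto simp: \<beta>_def)
  have "foldl step Q (ws1 @ ws2) = foldl step Q1 ws2" by (simp add: Q1_def)
  also have "\<dots> = Q(i := (Q i)(g := 1 + \<beta> * (Q i g - 1), -g := -1 + \<beta> * (Q i (-g) + 1)))"
    unfolding Q2 using g(3) by (simp add: Q1_def Q1 fun_eq_iff)
  finally have Q12: "foldl step Q (ws1 @ ws2) = \<dots>" .
  have "0 \<le> \<beta>" "\<beta> < 1 / 2" using \<alpha>_lt_1 n by (simp_all add: \<beta>_def)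
  moreover have "Q i g \<in> {-1..1}" "Q i (-g) \<in> {-1..1}"
    using bounded i g by (auto simp: q_bounded_def)
  ultimately have "\<beta> * (-1) \<le> \<beta> * Q i g" "\<beta> * Q i (-g) \<le> \<beta> * 1"
    by (intro mult_left_mono; simp)+
  then have "foldl step Q (ws1 @ ws2) i (-g) < foldl step Q (ws1 @ ws2) i g"
    unfolding Q12 using \<open>\<beta> < 1 / 2\<close> g(3) by (simp add: algebra_simps)
  moreover have "foldl step Q (ws1 @ ws2) k = Q k" if "k \<noteq> i" for k
    unfolding Q12 using that by simp
  ultimately show ?thesis using ws1 ws2
    by (intro exI[of _ "ws1 @ ws2"]) (auto simp: g_def)
qed

text \<open>Along a path from a supporter of g to a non-supporter some edge leaves the supporters;
  its far end copies its supporting neighbour.\<close>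
lemma gain_supporter:
  assumes n: "(1 - \<alpha>) ^ n < 1 / 2" and bounded: "q_bounded N Q" and g: "g \<in> {-1, 1}"
    and i: "i \<in> supporters N g Q" and v: "v \<in> agents N - supporters N g Q"
  shows "\<exists>ws b. b \<in> agents N - supporters N g Q \<and> length ws = 2 * n \<and>
    (\<forall>c\<in>set ws. admissible c) \<and> supporters N g (foldl step Q ws) = insert b (supporters N g Q)"
proof -
  have "i \<in> agents N" "v \<notin> supporters N g Q" using i v by (auto simp: supporters_def)
  then have "E\<^sup>*\<^sup>* i v" using connected v by (simp add: connected_graph_def)
  then obtain a b where a: "a \<in> supporters N g Q" and b: "b \<notin> supporters N g Q" and ab: "E a b"
    using rtranclp_crosses_boundary[OF _ i \<open>v \<notin> supporters N g Q\<close>] by blast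
  have b_agent: "b \<in> agents N" using edge_in_agents[OF ab] by simp
  have "favoured Q a = g" using a g by (intro favoured_eq_if_prefers) (auto simp: supporters_def)
  then obtain ws where ws: "length ws = 2 * n" "\<forall>c\<in>set ws. admissible c"
    and others: "\<And>k. k \<noteq> b \<Longrightarrow> foldl step Q ws k = Q k"
    and copied: "foldl step Q ws b (- g) < foldl step Q ws b g"
    using copy_neighbour[OF n b_agent ab bounded] by auto
  have "supporters N g (foldl step Q ws) = insert b (supporters N g Q)"
  proof (intro set_eqI)
    show "k \<in> supporters N g (foldl step Q ws) \<longleftrightarrow> k \<in> insert b (supporters N g Q)" for k
      using others[of k] copied b_agent by (cases "k = b") (auto simp: supporters_def)
  qed
  then show ?thesis using ws b b_agent by blast
qed

lemma spread_consensus: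
  assumes n: "(1 - \<alpha>) ^ n < 1 / 2"
  shows "q_bounded N Q \<Longrightarrow> g \<in> {-1, 1} \<Longrightarrow> supporters N g Q \<noteq> {} \<Longrightarrow>
    card (agents N - supporters N g Q) \<le> m \<Longrightarrow>
    \<exists>ws. length ws \<le> 2 * n * m \<and> (\<forall>c\<in>set ws. admissible c) \<and> consensus N (foldl step Q ws)"
proof (induction m arbitrary: Q)
  case 0
  then have "consensus_on N g Q"
    using finite_agents by (simp add: consensus_on_iff_supporters)
  then show ?case using 0 by (intro exI[of _ "[]"]) (auto simp: consensus_def)
next
  case (Suc m)
  show ?case
  proof (cases "consensus_on N g Q")
    case True
    then show ?thesis using Suc by (intro exI[of _ "[]"]) (auto simp: consensus_def)
  next
    case False
    then obtain v where "v \<in> agents N - supporters N g Q"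
      by (auto simp: consensus_on_iff_supporters)
    moreover obtain i where "i \<in> supporters N g Q" using Suc.prems(3) by blast
    ultimately obtain ws1 b where b: "b \<in> agents N - supporters N g Q"
      and ws1: "length ws1 = 2 * n" "\<forall>c\<in>set ws1. admissible c"
      and grown: "supporters N g (foldl step Q ws1) = insert b (supporters N g Q)"
      using gain_supporter[OF n Suc.prems(1,2)] by blast
    have "agents N - supporters N g (foldl step Q ws1) = agents N - supporters N g Q - {b}"
      using grown by auto
    then have "card (agents N - supporters N g (foldl step Q ws1)) \<le> m"
      using Suc.prems(4) b finite_agents by (simp add: card_Diff_singleton)
    then obtain ws2 where ws2: "length ws2 \<le> 2 * n * m" "\<forall>c\<in>set ws2. admissible c"
      "consensus N (foldl step (foldl step Q ws1) ws2)"
      using Suc.IH[OF q_bounded_foldl[OF Suc.prems(1)] Suc.prems(2)] grown by blast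
    then show ?thesis using ws1 by (intro exI[of _ "ws1 @ ws2"]) auto
  qed
qed

lemma reach_consensus:
  assumes n: "(1 - \<alpha>) ^ n < 1 / 2" and bounded: "q_bounded N Q"
  shows "\<exists>ws. length ws \<le> 2 * n * N \<and> (\<forall>c\<in>set ws. admissible c) \<and> consensus N (foldl step Q ws)"
proof -
  have one: "1 \<in> agents N" using N_ge_2 by (simp add: agents_def)
  obtain j where j: "E j 1" using ex_neighbour[OF one] by blast
  define g where "g = favoured Q j"
  have g: "g \<in> {-1, 1}" using favoured_cases[of Q j] by (auto simp: g_def)
  obtain ws1 where ws1: "length ws1 = 2 * n" "\<forall>c\<in>set ws1. admissible c"
    and copied: "foldl step Q ws1 1 (- g) < foldl step Q ws1 1 g"
    using copy_neighbour[OF n one j bounded] by (auto simp: g_def)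
  have one_supports: "1 \<in> supporters N g (foldl step Q ws1)"
    using copied one by (simp add: supporters_def)
  then have "agents N - supporters N g (foldl step Q ws1) \<subseteq> agents N - {1}" by auto
  then have "card (agents N - supporters N g (foldl step Q ws1)) \<le> card (agents N - {1})"
    by (intro card_mono) (simp add: finite_agents)
  also have "\<dots> = N - 1" using one by (simp add: agents_def)
  finally obtain ws2 where ws2: "length ws2 \<le> 2 * n * (N - 1)" "\<forall>c\<in>set ws2. admissible c"
    "consensus N (foldl step (foldl step Q ws1) ws2)"
    using spread_consensus[OF n q_bounded_foldl[OF bounded] g] one_supports by blast
  have "2 * n + 2 * n * (N - 1) = 2 * n * N" using N_ge_2 by (cases N) (simp_all add: algebra_simps)
  then show ?thesis using ws1 ws2 by (intro exI[of _ "ws1 @ ws2"]) auto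
qed

lemma AE_eventual_consensus:
  assumes bounded: "q_bounded N Q0"
  shows "AE \<omega> in stream_space (measure_pmf D). \<exists>t0. \<exists>x\<in>{-1, 1::int}. \<forall>i\<in>agents N. \<forall>t\<ge>t0.
    arlod_traj \<alpha> Q0 \<omega> t i (-x) < arlod_traj \<alpha> Q0 \<omega> t i x"
proof -
  obtain n where n: "(1 - \<alpha>) ^ n < 1 / 2"
    using real_arch_pow_inv[of "1 / 2" "1 - \<alpha>"] \<alpha>_pos by auto
  define p where "p = min \<epsilon> (1 - \<epsilon>) / real N ^ 2"
  have p: "0 < p" "p \<le> 1"
    using \<epsilon>_pos \<epsilon>_lt_1 N_ge_2 by (auto simp: p_def field_simps intro: order.trans[OF _ one_le_power])
  have "AE \<omega> in stream_space (measure_pmf D). \<exists>t. consensus N (foldl step Q0 (stake t \<omega>))"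
  proof (rule AE_eventually_reaches[where I = "q_bounded N" and p = p and K = "2 * n * N"])
    show "\<exists>ws. length ws \<le> 2 * n * N \<and> (\<forall>c\<in>set ws. p \<le> pmf D c) \<and> consensus N (foldl step Q ws)"
      if bounded_Q: "q_bounded N Q" for Q
    proof -
      obtain ws where "length ws \<le> 2 * n * N" "\<forall>c\<in>set ws. admissible c" "consensus N (foldl step Q ws)"
        using reach_consensus[OF n bounded_Q] by blast
      then show ?thesis using pmf_round_noise_ge unfolding p_def by blast
    qed
  qed (use finite_set_round_noise q_bounded_step p bounded in auto)
  moreover have "AE \<omega> in stream_space (measure_pmf D). stream_all (\<lambda>c. c \<in> set_pmf D) \<omega>"
    by (rule prob_space.AE_stream_all[OF prob_space_measure_pmf]) (simp_all add: AE_measure_pmf)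
  then have "AE \<omega> in stream_space (measure_pmf D). \<forall>t. admissible (\<omega> !! t)"
    by (rule eventually_mono) (simp add: stream_all_def set_round_noise)
  ultimately show ?thesis
  proof eventually_elim
    case (elim \<omega>)
    then obtain t0 x where x: "x \<in> {-1, 1}" and "consensus_on N x (arlod_traj \<alpha> Q0 \<omega> t0)"
      by (auto simp: consensus_def arlod_traj_eq_foldl)
    then have "consensus_on N x (arlod_traj \<alpha> Q0 \<omega> t)" if "t0 \<le> t" for t
      using consensus_on_traj_persists[OF elim(2) bounded x _ that] by blast
    then show ?case using x unfolding consensus_on_def by blast
  qed
qed

end

theorem theorem1:
  fixes N :: nat and E :: "nat \<Rightarrow> nat \<Rightarrow> bool" and \<alpha> \<epsilon> :: real and Q0 :: qstate
  assumes "N \<ge> 2"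
    and "simple_graph N E"
    and "connected_graph N E"
    and "0 < \<alpha>" and "\<alpha> < 1"
    and "0 < \<epsilon>" and "\<epsilon> < 1"
    and "\<forall>i\<in>agents N. \<forall>x\<in>{-1, 1::int}. Q0 i x \<in> {-1..1}"
  shows "measure (stream_space (measure_pmf (round_noise N E \<epsilon>)))
           {\<omega> \<in> space (stream_space (measure_pmf (round_noise N E \<epsilon>))).
              \<exists>t0. \<exists>x\<in>{-1, 1::int}. \<forall>i\<in>agents N. \<forall>t\<ge>t0.
                 arlod_traj \<alpha> Q0 \<omega> t i x > arlod_traj \<alpha> Q0 \<omega> t i (-x)} = 1"
proof -
  interpret arlod N E \<alpha> \<epsilon> using assms(1-7) by unfold_locales
  have "q_bounded N Q0" using assms(8) by (simp add: q_bounded_def)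
  then have "AE \<omega> in stream_space (measure_pmf (round_noise N E \<epsilon>)). \<exists>t0. \<exists>x\<in>{-1, 1::int}.
      \<forall>i\<in>agents N. \<forall>t\<ge>t0. arlod_traj \<alpha> Q0 \<omega> t i (-x) < arlod_traj \<alpha> Q0 \<omega> t i x"
    by (rule AE_eventual_consensus)
  then show ?thesis
    by (subst prob_space.prob_Collect_eq_1[OF prob_space.prob_space_stream_space[OF prob_space_measure_pmf]])
       (use finite_agents in measurable)
qed

end
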